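(* Let $\mathcal{H}$ be a separable complex Hilbert space, $U$ a unitary operator on $\mathcal{H}$ with spectral measure $E(\cdot)$, and $\Omega\subset\mathbb{T}$ a Borel set. (a) If $\Omega^* = \Omega$, then $C(E(\Omega)\mathcal{H}) = E(\Omega)\mathcal{H}$ for every conjugation $C$ on $\mathcal{H}$ with $CUC = U$. (b) If $C$ is a conjugation on $\mathcal{H}$ with $CUC = U$ and $C(E(\Omega)\mathcal{H}) \subset E(\Omega)\mathcal{H}$, then $E(\Omega\setminus\Omega^* ) = 0$.
   Context: A conjugation on $\mathcal{H}$ is an antilinear, isometric map $C$ with $C^2 = I$. $E(\cdot)$ is the unique projection-valued spectral measure on $\mathbb{T}$ with $U = \int \xi\, dE(\xi)$. For a Borel set $\Omega\subset\mathbb{T}$, $\Omega^* = \{\overline{\xi}:\xi\in\Omega\}$. *)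

theory Defs
  imports "HOL-Analysis.Analysis" "HOL-Probability.Probability"
begin

text \<open>A complex Hilbert space is modelled on an additive group type 'h by an explicit
complex scalar multiplication sm and an inner product ip (linear in the first,
conjugate-linear in the second argument). All topological notions are taken with
respect to the induced norm hnorm, not the (irrelevant) topology of the type.\<close>

definition hnorm :: "('h \<Rightarrow> 'h \<Rightarrow> complex) \<Rightarrow> 'h \<Rightarrow> real" where
  "hnorm ip x = sqrt (Re (ip x x))"

definition complex_vector_space :: "(complex \<Rightarrow> 'h::ab_group_add \<Rightarrow> 'h) \<Rightarrow> bool" where
  "complex_vector_space sm \<longleftrightarrow>
     (\<forall>a x y. sm a (x + y) = sm a x + sm a y) \<and>
     (\<forall>a b x. sm (a + b) x = sm a x + sm b x) \<and>
     (\<forall>a b x. sm a (sm b x) = sm (a * b) x) \<and>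
     (\<forall>x. sm 1 x = x)"

definition inner_product :: "(complex \<Rightarrow> 'h::ab_group_add \<Rightarrow> 'h) \<Rightarrow> ('h \<Rightarrow> 'h \<Rightarrow> complex) \<Rightarrow> bool" where
  "inner_product sm ip \<longleftrightarrow>
     (\<forall>x y z. ip (x + y) z = ip x z + ip y z) \<and>
     (\<forall>a x y. ip (sm a x) y = a * ip x y) \<and>
     (\<forall>x y. ip y x = cnj (ip x y)) \<and>
     (\<forall>x. x \<noteq> 0 \<longrightarrow> Re (ip x x) > 0)"

definition hcomplete :: "('h::ab_group_add \<Rightarrow> 'h \<Rightarrow> complex) \<Rightarrow> bool" where
  "hcomplete ip \<longleftrightarrow>
     (\<forall>s :: nat \<Rightarrow> 'h. (\<forall>e>0. \<exists>N. \<forall>m\<ge>N. \<forall>n\<ge>N. hnorm ip (s m - s n) < e)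
        \<longrightarrow> (\<exists>l. (\<lambda>n. hnorm ip (s n - l)) \<longlonglongrightarrow> 0))"

definition complex_hilbert_space :: "(complex \<Rightarrow> 'h::ab_group_add \<Rightarrow> 'h) \<Rightarrow> ('h \<Rightarrow> 'h \<Rightarrow> complex) \<Rightarrow> bool" where
  "complex_hilbert_space sm ip \<longleftrightarrow> complex_vector_space sm \<and> inner_product sm ip \<and> hcomplete ip"

definition hseparable :: "('h::ab_group_add \<Rightarrow> 'h \<Rightarrow> complex) \<Rightarrow> bool" where
  "hseparable ip \<longleftrightarrow> (\<exists>D. countable D \<and> (\<forall>x e. e > 0 \<longrightarrow> (\<exists>d\<in>D. hnorm ip (x - d) < e)))"

definition hlinear :: "(complex \<Rightarrow> 'h::ab_group_add \<Rightarrow> 'h) \<Rightarrow> ('h \<Rightarrow> 'h) \<Rightarrow> bool" where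
  "hlinear sm T \<longleftrightarrow> (\<forall>x y. T (x + y) = T x + T y) \<and> (\<forall>a x. T (sm a x) = sm a (T x))"

definition hbounded :: "('h::ab_group_add \<Rightarrow> 'h \<Rightarrow> complex) \<Rightarrow> ('h \<Rightarrow> 'h) \<Rightarrow> bool" where
  "hbounded ip T \<longleftrightarrow> (\<exists>K. \<forall>x. hnorm ip (T x) \<le> K * hnorm ip x)"

definition unitary_op :: "(complex \<Rightarrow> 'h::ab_group_add \<Rightarrow> 'h) \<Rightarrow> ('h \<Rightarrow> 'h \<Rightarrow> complex) \<Rightarrow> ('h \<Rightarrow> 'h) \<Rightarrow> bool" where
  "unitary_op sm ip U \<longleftrightarrow> hlinear sm U \<and> surj U \<and> (\<forall>x y. ip (U x) (U y) = ip x y)"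

definition conjugation :: "(complex \<Rightarrow> 'h::ab_group_add \<Rightarrow> 'h) \<Rightarrow> ('h \<Rightarrow> 'h \<Rightarrow> complex) \<Rightarrow> ('h \<Rightarrow> 'h) \<Rightarrow> bool" where
  "conjugation sm ip C \<longleftrightarrow>
     (\<forall>x y. C (x + y) = C x + C y) \<and> (\<forall>a x. C (sm a x) = sm (cnj a) (C x)) \<and>
     (\<forall>x. hnorm ip (C x) = hnorm ip x) \<and> (\<forall>x. C (C x) = x)"

definition borel_T :: "complex set set" where
  "borel_T = {A. A \<in> sets borel \<and> A \<subseteq> sphere 0 1}"

definition pv_measure :: "(complex \<Rightarrow> 'h::ab_group_add \<Rightarrow> 'h) \<Rightarrow> ('h \<Rightarrow> 'h \<Rightarrow> complex)
     \<Rightarrow> (complex set \<Rightarrow> 'h \<Rightarrow> 'h) \<Rightarrow> bool" where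
  "pv_measure sm ip E \<longleftrightarrow>
     (\<forall>A\<in>borel_T. hlinear sm (E A) \<and> hbounded ip (E A) \<and>
        (\<forall>x. E A (E A x) = E A x) \<and> (\<forall>x y. ip (E A x) y = ip x (E A y))) \<and>
     (\<forall>x. E (sphere 0 1) x = x) \<and>
     (\<forall>A\<in>borel_T. \<forall>B\<in>borel_T. \<forall>x. E (A \<inter> B) x = E A (E B x)) \<and>
     (\<forall>A :: nat \<Rightarrow> complex set. (\<forall>i. A i \<in> borel_T) \<longrightarrow> disjoint_family A \<longrightarrow>
        (\<forall>x. (\<lambda>n. hnorm ip ((\<Sum>i<n. E (A i) x) - E (\<Union>i. A i) x)) \<longlonglongrightarrow> 0))"

definition pvm_scalar :: "('h::ab_group_add \<Rightarrow> 'h \<Rightarrow> complex) \<Rightarrow> (complex set \<Rightarrow> 'h \<Rightarrow> 'h) \<Rightarrow> 'h \<Rightarrow> complex measure" where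
  "pvm_scalar ip E x = measure_of (sphere 0 1) borel_T (\<lambda>A. ennreal ((hnorm ip (E A x))\<^sup>2))"

text \<open>E is the spectral measure of U, i.e. U = \<integral> \<xi> dE(\<xi>) (weakly, via the quadratic form,
which determines the operator by polarization).\<close>
definition spectral_measure_of :: "(complex \<Rightarrow> 'h::ab_group_add \<Rightarrow> 'h) \<Rightarrow> ('h \<Rightarrow> 'h \<Rightarrow> complex)
     \<Rightarrow> ('h \<Rightarrow> 'h) \<Rightarrow> (complex set \<Rightarrow> 'h \<Rightarrow> 'h) \<Rightarrow> bool" where
  "spectral_measure_of sm ip U E \<longleftrightarrow> pv_measure sm ip E \<and>
     (\<forall>x. integrable (pvm_scalar ip E x) (\<lambda>z. z) \<and>
          ip (U x) x = (LINT z|pvm_scalar ip E x. z))"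

end

theory Submission
  imports Defs
begin

text \<open>Write \<open>\<mu>\<^sub>x(\<Omega>) = \<parallel>E(\<Omega>)x\<parallel>\<^sup>2\<close>. The only link between \<open>U\<close> and \<open>E\<close> is
\<open>\<langle>Ux,x\<rangle> = \<integral>\<xi> d\<mu>\<^sub>x\<close>; applied to \<open>E(A)x + E(\<T>-A)x\<close> it shows that \<open>U\<close> commutes
with \<open>E\<close>, hence \<open>\<mu>\<^bsub>Ux+cx\<^esub> = |\<xi>+c|\<^sup>2 \<mu>\<^sub>x\<close>, and polarization then gives all moments
\<open>\<langle>U\<^sup>nx,x\<rangle> = \<integral>\<xi>\<^sup>n d\<mu>\<^sub>x\<close>. As \<open>C\<close> is antiunitary and commutes with \<open>U\<close>, the image of
\<open>\<mu>\<^bsub>Cx\<^esub>\<close> under \<open>\<xi> \<mapsto> \<xi>\<^sup>*\<close> has the same moments as \<open>\<mu>\<^sub>x\<close>; by Stone-Weierstrass a finite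
measure on the circle is determined by its moments, so \<open>\<parallel>E(\<Omega>\<^sup>*)Cx\<parallel> = \<parallel>E(\<Omega>)x\<parallel>\<close>, and
polarization again yields \<open>CE(\<Omega>\<^sup>*)C = E(\<Omega>)\<close>. For (b), invariance of
the range of \<open>E(\<Omega>)\<close> under \<open>C\<close> means that the range of \<open>E(\<Omega>\<^sup>*) = CE(\<Omega>)C\<close> lies in it, so
\<open>E(\<Omega>\<^sup>* - \<Omega>) = 0\<close>, and conjugating once more gives \<open>E(\<Omega> - \<Omega>\<^sup>*) = 0\<close>.\<close>

lemma sets_restrict_space_borel_eq_sigma_closed:
  assumes "S \<in> sets borel"
  shows "sets (restrict_space borel S) = sigma_sets S ((\<inter>) S ` Collect closed)"
proof -
  have "S \<in> sigma_sets UNIV (Collect closed)"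
    using assms by (simp add: borel_eq_closed)
  then show ?thesis
    unfolding sets_restrict_space borel_eq_closed by (simp add: sigma_sets_Int)
qed

lemma tendsto_cutoff_infdist_indicator:
  assumes "closed F" "F \<noteq> {}"
  shows "(\<lambda>k. max 0 (1 - real k * infdist x F)) \<longlonglongrightarrow> indicator F x"
proof (cases "x \<in> F")
  case False
  then have d: "infdist x F > 0"
    using in_closed_iff_infdist_zero[OF assms] infdist_nonneg[of x F] by simp
  obtain N :: nat where "1 / infdist x F < real N"
    using reals_Archimedean2 by blast
  then have "1 < real N * infdist x F"
    using d by (simp add: divide_less_eq)
  moreover have "real N * infdist x F \<le> real k * infdist x F" if "N \<le> k" for k
    using that d by (simp add: mult_right_mono)
  ultimately have "max 0 (1 - real k * infdist x F) = 0" if "N \<le> k" for k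
    using that by fastforce
  then have "\<forall>\<^sub>F k in sequentially. max 0 (1 - real k * infdist x F) = 0"
    by (auto simp: eventually_sequentially)
  with False show ?thesis
    by (simp add: tendsto_eventually)
qed simp

lemma integral_tendsto_measure_Int:
  fixes s :: "nat \<Rightarrow> 'a::topological_space \<Rightarrow> real"
  assumes "finite_measure K" "S \<in> sets borel" and sets_K: "sets K = sets (restrict_space borel S)"
    and "F \<in> sets borel" and "\<And>k. s k \<in> borel_measurable K" "\<And>k x. \<bar>s k x\<bar> \<le> 1"
    and "\<And>x. (\<lambda>k. s k x) \<longlonglongrightarrow> indicator F x"
  shows "(\<lambda>k. \<integral>x. s k x \<partial>K) \<longlonglongrightarrow> measure K (S \<inter> F)"
proof -
  interpret finite_measure K by fact
  have "(\<lambda>k. \<integral>x. s k x \<partial>K) \<longlonglongrightarrow> (\<integral>x. indicator F x \<partial>K)"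
  proof (rule integral_dominated_convergence[where w = "\<lambda>_. 1"])
    show "indicator F \<in> borel_measurable K"
      using \<open>F \<in> sets borel\<close> unfolding measurable_cong_sets[OF sets_K refl]
      by (intro measurable_restrict_space1 borel_measurable_indicator)
  qed (use assms in simp_all)
  moreover have "space K = S"
    using sets_eq_imp_space_eq[OF sets_K] \<open>S \<in> sets borel\<close> by simp
  ultimately show ?thesis
    by (simp add: Int_commute)
qed

lemma finite_measure_eqI_integral_continuous:
  fixes M N :: "'a::metric_space measure"
  assumes fin_M: "finite_measure M" and fin_N: "finite_measure N"
    and S: "S \<in> sets borel"
    and sets_M: "sets M = sets (restrict_space borel S)"
    and sets_N: "sets N = sets (restrict_space borel S)"
    and integral_eq: "\<And>f :: 'a \<Rightarrow> real. continuous_on S f \<Longrightarrow> bounded (f ` S) \<Longrightarrow>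
                        (\<integral>x. f x \<partial>M) = (\<integral>x. f x \<partial>N)"
  shows "M = N"
proof -
  let ?G = "(\<inter>) S ` Collect closed"
  have measure_closed: "measure M (S \<inter> F) = measure N (S \<inter> F)" if "closed F" for F
  proof (cases "F = {}")
    case False
    define s where "s k x = max 0 (1 - real k * infdist x F)" for k :: nat and x
    have s_cont: "continuous_on S (s k)" for k
      unfolding s_def by (intro continuous_intros)
    have s_bounded: "\<bar>s k x\<bar> \<le> 1" for k x
      unfolding s_def by (simp add: infdist_nonneg)
    have s_measurable: "s k \<in> borel_measurable K"
      if "sets K = sets (restrict_space borel S)" for k K
      unfolding measurable_cong_sets[OF that refl] by (rule borel_measurable_continuous_on_restrict[OF s_cont])
    have "bounded (s k ` S)" for k
      using s_bounded by (auto simp: bounded_iff)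
    then have integral_s_eq: "(\<integral>x. s k x \<partial>M) = (\<integral>x. s k x \<partial>N)" for k
      using integral_eq[OF s_cont] by blast
    have lim: "(\<lambda>k. \<integral>x. s k x \<partial>K) \<longlonglongrightarrow> measure K (S \<inter> F)"
      if "finite_measure K" "sets K = sets (restrict_space borel S)" for K
      using that(1) S that(2) borel_closed[OF \<open>closed F\<close>] s_measurable[OF that(2)] s_bounded
    proof (rule integral_tendsto_measure_Int)
      show "(\<lambda>k. s k x) \<longlonglongrightarrow> indicator F x" for x
        unfolding s_def by (rule tendsto_cutoff_infdist_indicator[OF \<open>closed F\<close> False])
    qed
    have "(\<lambda>k. \<integral>x. s k x \<partial>N) \<longlonglongrightarrow> measure M (S \<inter> F)"
      using lim[OF fin_M sets_M] by (simp add: integral_s_eq)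
    then show ?thesis
      using lim[OF fin_N sets_N] by (rule LIMSEQ_unique)
  qed simp
  show ?thesis
  proof (rule measure_eqI_generator_eq[where E = ?G and \<Omega> = S and A = "\<lambda>_. S"])
    show "Int_stable ?G"
    proof (rule Int_stableI)
      fix A B assume "A \<in> ?G" "B \<in> ?G"
      then obtain F F' where "closed F" "closed F'" "A = S \<inter> F" "B = S \<inter> F'"
        by auto
      then have "A \<inter> B = S \<inter> (F \<inter> F')" "closed (F \<inter> F')"
        by auto
      then show "A \<inter> B \<in> ?G"
        by blast
    qed
    show "emeasure M X = emeasure N X" if "X \<in> ?G" for X
    proof -
      from that obtain F where "closed F" "X = S \<inter> F"
        by auto
      then show ?thesis
        using measure_closed by (simp add: finite_measure.emeasure_eq_measure[OF fin_M]
            finite_measure.emeasure_eq_measure[OF fin_N])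
    qed
    show "range (\<lambda>_. S) \<subseteq> ?G"
      using image_eqI[of S "(\<inter>) S" UNIV "Collect closed"] by auto
    show "sets M = sigma_sets S ?G" "sets N = sigma_sets S ?G"
      using sets_M sets_N sets_restrict_space_borel_eq_sigma_closed[OF S] by simp_all
    show "emeasure M S \<noteq> \<infinity>"
      using finite_measure.emeasure_finite[OF fin_M] by simp
  qed auto
qed

lemma integrable_continuous_on_compact:
  fixes f :: "'a::topological_space \<Rightarrow> 'b::{banach, second_countable_topology}"
  assumes "finite_measure M" and sets_M: "sets M = sets (restrict_space borel S)"
    and "compact S" "continuous_on S f"
  shows "integrable M f"
proof -
  interpret finite_measure M by fact
  have space_M: "space M = S"
    using sets_eq_imp_space_eq[OF sets_M] by (simp add: space_restrict_space)
  obtain B where B: "\<And>x. x \<in> S \<Longrightarrow> norm (f x) \<le> B"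
    using compact_imp_bounded[OF compact_continuous_image[OF \<open>continuous_on S f\<close> \<open>compact S\<close>]]
    by (auto simp: bounded_iff)
  show ?thesis
  proof (rule integrable_const_bound[where B = B])
    show "AE x in M. norm (f x) \<le> B"
      using B by (auto simp: space_M intro!: AE_I2)
    show "f \<in> borel_measurable M"
      unfolding measurable_cong_sets[OF sets_M refl]
      by (rule borel_measurable_continuous_on_restrict) fact
  qed
qed

lemma integral_abs_diff_le:
  fixes f g :: "'a \<Rightarrow> real"
  assumes "finite_measure K" "integrable K f" "integrable K g" "\<And>x. x \<in> space K \<Longrightarrow> \<bar>f x - g x\<bar> \<le> e"
  shows "\<bar>(\<integral>x. f x \<partial>K) - (\<integral>x. g x \<partial>K)\<bar> \<le> e * measure K (space K)"
proof -
  interpret finite_measure K by fact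
  have "\<bar>(\<integral>x. f x \<partial>K) - (\<integral>x. g x \<partial>K)\<bar> = \<bar>\<integral>x. f x - g x \<partial>K\<bar>"
    using assms by simp
  also have "\<dots> \<le> (\<integral>x. \<bar>f x - g x\<bar> \<partial>K)"
    by (rule integral_abs_bound)
  also have "\<dots> \<le> (\<integral>x. e \<partial>K)"
    using assms by (intro integral_mono) auto
  also have "\<dots> = e * measure K (space K)"
    by simp
  finally show ?thesis .
qed

lemma borel_T_eq_restrict_space: "borel_T = sets (restrict_space borel (sphere 0 1))"
  by (auto simp: borel_T_def sets_restrict_space image_iff)

lemma borel_T_sphere: "sphere 0 1 \<in> borel_T"
  and borel_T_empty: "{} \<in> borel_T"
  and borel_T_subset: "A \<in> borel_T \<Longrightarrow> A \<subseteq> sphere 0 1"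
  and borel_T_Int: "A \<in> borel_T \<Longrightarrow> B \<in> borel_T \<Longrightarrow> A \<inter> B \<in> borel_T"
  and borel_T_Diff: "A \<in> borel_T \<Longrightarrow> B \<in> borel_T \<Longrightarrow> A - B \<in> borel_T"
  by (auto simp: borel_T_def)

lemma borel_T_UN_lessThan:
  assumes "\<And>i. F i \<in> borel_T"
  shows "(\<Union>i<(n::nat). F i) \<in> borel_T"
proof -
  have "(\<Union>i<n. F i) \<in> sets borel"
    using assms by (intro sets.finite_UN) (simp_all add: borel_T_def)
  then show ?thesis
    using assms by (auto simp: borel_T_def)
qed

lemma borel_T_cnj_image: "A \<in> borel_T \<Longrightarrow> cnj ` A \<in> borel_T"
proof -
  assume A: "A \<in> borel_T"
  have "cnj ` A = cnj -` A"
    by (auto simp: image_iff) (metis complex_cnj_cnj)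
  moreover have "cnj -` A \<in> sets borel"
    using A unfolding borel_T_def
    by (auto intro: measurable_sets_borel[OF borel_measurable_continuous_onI[OF continuous_on_cnj[OF continuous_on_id]]])
  ultimately show ?thesis
    using A by (auto simp: borel_T_def)
qed

lemma sigma_algebra_borel_T: "sigma_algebra (sphere 0 1) borel_T"
  using sets.sigma_algebra_axioms[of "restrict_space borel (sphere 0 1)"]
  by (simp add: borel_T_eq_restrict_space space_restrict_space)

lemma norm_add_sq_circle:
  fixes z c :: complex
  assumes "cmod z = 1"
  shows "(cmod (z + c))\<^sup>2 = 1 + (cmod c)\<^sup>2 + 2 * Re (cnj c * z)"
proof -
  have "(Re z)\<^sup>2 + (Im z)\<^sup>2 = 1"
    using assms by (simp add: cmod_power2[symmetric])
  then show ?thesis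
    unfolding cmod_power2 by (simp add: power2_sum algebra_simps)
qed

lemma real_linear_complex_eq_combination_cnj:
  fixes g :: "complex \<Rightarrow> real"
  assumes "linear g"
  obtains a b where "\<And>z. of_real (g z) = a * z + b * cnj z"
proof
  fix z
  have "z = Re z *\<^sub>R 1 + Im z *\<^sub>R \<i>"
    by (simp add: complex_eq_iff)
  also have "g (Re z *\<^sub>R 1 + Im z *\<^sub>R \<i>) = Re z * g 1 + Im z * g \<i>"
    by (simp add: linear_add[OF assms] linear_scale[OF assms])
  finally have "of_real (g z) = complex_of_real (Re z * g 1 + Im z * g \<i>)"
    by (rule arg_cong)
  also have "\<dots> = (g 1 - \<i> * g \<i>) / 2 * z + (g 1 + \<i> * g \<i>) / 2 * cnj z"
    by (simp add: complex_eq_iff field_simps)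
  finally show "of_real (g z) = (g 1 - \<i> * g \<i>) / 2 * z + (g 1 + \<i> * g \<i>) / 2 * cnj z" .
qed

lemma power_mult_cnj_power_circle:
  fixes z :: complex
  assumes "cmod z = 1"
  shows "z ^ j * cnj z ^ m = (if m \<le> j then z ^ (j - m) else cnj (z ^ (m - j)))"
proof -
  have z_cnj: "z * cnj z = 1"
    using assms by (simp add: complex_norm_square[symmetric])
  show ?thesis
  proof (cases "m \<le> j")
    case True
    then have "z ^ j * cnj z ^ m = z ^ (j - m) * (z * cnj z) ^ m"
      by (simp add: power_mult_distrib mult.assoc power_add[symmetric])
    with True z_cnj show ?thesis
      by simp
  next
    case False
    then have "z ^ j * cnj z ^ m = (z * cnj z) ^ j * cnj z ^ (m - j)"
      by (simp add: power_mult_distrib mult.assoc power_add[symmetric])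
    with False z_cnj show ?thesis
      by simp
  qed
qed

lemma space_borel_T: "sets K = borel_T \<Longrightarrow> space K = sphere 0 1"
  using sets_eq_imp_space_eq[of K "restrict_space borel (sphere 0 1)"]
  by (simp add: borel_T_eq_restrict_space space_restrict_space)

lemma integral_power_mult_cnj_power_circle:
  assumes "space K = sphere 0 1"
  shows "(\<integral>z. z ^ j * cnj z ^ m \<partial>K) =
    (if m \<le> j then \<integral>z. z ^ (j - m) \<partial>K else cnj (\<integral>z. z ^ (m - j) \<partial>K))"
proof -
  have "(\<integral>z. z ^ j * cnj z ^ m \<partial>K) = (\<integral>z. (if m \<le> j then z ^ (j - m) else cnj (z ^ (m - j))) \<partial>K)"
    using assms by (intro Bochner_Integration.integral_cong) (simp_all add: power_mult_cnj_power_circle)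
  then show ?thesis
    by (cases "m \<le> j") (simp_all del: complex_cnj_power)
qed

section \<open>Measures on the circle are determined by their moments\<close>

locale circle_measures_equal_moments =
  fixes M N :: "complex measure"
  assumes finite_M: "finite_measure M" and finite_N: "finite_measure N"
    and sets_M: "sets M = borel_T" and sets_N: "sets N = borel_T"
    and moments_eq: "\<And>n. (\<integral>z. z ^ n \<partial>M) = (\<integral>z. z ^ n \<partial>N)"
begin

lemma integrable_continuous:
  fixes f :: "complex \<Rightarrow> 'b::{banach, second_countable_topology}"
  assumes "continuous_on (sphere 0 1) f"
  shows "integrable M f" "integrable N f"
  using integrable_continuous_on_compact[OF finite_M _ compact_sphere assms]
    integrable_continuous_on_compact[OF finite_N _ compact_sphere assms]
    sets_M sets_N
  by (simp_all add: borel_T_eq_restrict_space)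

lemma integral_power_mult_cnj_power_eq:
  "(\<integral>z. z ^ j * cnj z ^ m \<partial>M) = (\<integral>z. z ^ j * cnj z ^ m \<partial>N)"
  using integral_power_mult_cnj_power_circle[OF space_borel_T[OF sets_M]]
    integral_power_mult_cnj_power_circle[OF space_borel_T[OF sets_N]] moments_eq
  by simp

(* The monomials are carried along as a free parameter: this makes the property stable under
   multiplication by z and cnj z, hence by real polynomials in Re z and Im z. *)
definition moments_agree :: "(complex \<Rightarrow> complex) \<Rightarrow> bool" where
  "moments_agree h \<longleftrightarrow> continuous_on (sphere 0 1) h \<and>
     (\<forall>j m. (\<integral>z. h z * (z ^ j * cnj z ^ m) \<partial>M) = (\<integral>z. h z * (z ^ j * cnj z ^ m) \<partial>N))"

lemma moments_agree_one: "moments_agree (\<lambda>_. 1)"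
  unfolding moments_agree_def using integral_power_mult_cnj_power_eq by simp

lemma integrable_moment:
  assumes "continuous_on (sphere 0 1) h"
  shows "integrable M (\<lambda>z. h z * (z ^ j * cnj z ^ m))" "integrable N (\<lambda>z. h z * (z ^ j * cnj z ^ m))"
  using assms by (auto intro!: integrable_continuous continuous_intros)

lemma moments_agree_real_polynomial_mult:
  assumes "real_polynomial_function g" "moments_agree h"
  shows "moments_agree (\<lambda>z. of_real (g z) * h z)"
  using assms
proof (induction g arbitrary: h rule: real_polynomial_function.induct)
  case (linear g)
  obtain a b where g_eq: "\<And>z. of_real (g z) = a * z + b * cnj z"
    using real_linear_complex_eq_combination_cnj bounded_linear.linear[OF linear.hyps] by blast
  have h_cont: "continuous_on (sphere 0 1) h"
    and h_agree: "\<And>j m. (\<integral>z. h z * (z ^ j * cnj z ^ m) \<partial>M) = (\<integral>z. h z * (z ^ j * cnj z ^ m) \<partial>N)"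
    using linear.prems by (simp_all add: moments_agree_def)
  have expand: "integral\<^sup>L K (\<lambda>z. of_real (g z) * h z * (z ^ j * cnj z ^ m)) =
      a * (\<integral>z. h z * (z ^ Suc j * cnj z ^ m) \<partial>K) + b * (\<integral>z. h z * (z ^ j * cnj z ^ Suc m) \<partial>K)"
    if "integrable K (\<lambda>z. h z * (z ^ Suc j * cnj z ^ m))"
      "integrable K (\<lambda>z. h z * (z ^ j * cnj z ^ Suc m))" for K j m
  proof -
    have "of_real (g z) * h z * (z ^ j * cnj z ^ m) =
        a * (h z * (z ^ Suc j * cnj z ^ m)) + b * (h z * (z ^ j * cnj z ^ Suc m))" for z
      unfolding g_eq by (simp add: algebra_simps)
    then show ?thesis
      using that by simp
  qed
  have "continuous_on (sphere 0 1) (\<lambda>z. of_real (g z) * h z)"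
    using linear_continuous_on[OF linear.hyps] h_cont by (intro continuous_intros) auto
  then show ?case
    unfolding moments_agree_def
    by (simp only: expand integrable_moment[OF h_cont] h_agree simp_thms all_simps)
next
  case (const c)
  then show ?case
    by (simp add: moments_agree_def mult.assoc continuous_intros)
next
  case (add g1 g2)
  have "moments_agree (\<lambda>z. of_real (g1 z) * h z)" "moments_agree (\<lambda>z. of_real (g2 z) * h z)"
    using add.IH add.prems by blast+
  then show ?case
    using integrable_moment
    by (auto simp: moments_agree_def distrib_left distrib_right intro: continuous_on_add)
next
  case (mult g1 g2)
  then have "moments_agree (\<lambda>z. of_real (g1 z) * (of_real (g2 z) * h z))"
    by blast
  then show ?case
    by (simp add: mult.assoc)
qed

lemma integral_eq_real_polynomial:
  assumes "real_polynomial_function g"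
  shows "(\<integral>z. g z \<partial>M) = (\<integral>z. g z \<partial>N)"
proof -
  have "moments_agree (\<lambda>z. of_real (g z) * 1)"
    using moments_agree_real_polynomial_mult[OF assms moments_agree_one] .
  then have "(\<integral>z. of_real (g z) * 1 * (z ^ 0 * cnj z ^ 0) \<partial>M) =
      (\<integral>z. of_real (g z) * 1 * (z ^ 0 * cnj z ^ 0) \<partial>N)"
    unfolding moments_agree_def by blast
  then show ?thesis
    by simp
qed

lemma integral_eq_continuous:
  fixes f :: "complex \<Rightarrow> real"
  assumes f: "continuous_on (sphere 0 1) f"
  shows "(\<integral>z. f z \<partial>M) = (\<integral>z. f z \<partial>N)"
proof -
  define c where "c = measure M (sphere 0 1) + measure N (sphere 0 1) + 1"
  have c: "c > 0"
    unfolding c_def by (simp add: add_nonneg_pos)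
  have "\<bar>(\<integral>z. f z \<partial>M) - (\<integral>z. f z \<partial>N)\<bar> \<le> 0 + e" if "e > 0" for e
  proof -
    obtain g where g: "real_polynomial_function g"
      and approx: "\<And>z. z \<in> sphere 0 1 \<Longrightarrow> \<bar>f z - g z\<bar> < e / c"
      using Stone_Weierstrass_real_polynomial_function[OF compact_sphere f] \<open>e > 0\<close> c
      by (metis divide_pos_pos)
    have g_cont: "continuous_on (sphere 0 1) g"
      using g by (simp add: continuous_at_imp_continuous_on continuous_real_polymonial_function)
    have "\<bar>(\<integral>z. f z \<partial>M) - (\<integral>z. f z \<partial>N)\<bar> \<le>
        e / c * measure M (sphere 0 1) + e / c * measure N (sphere 0 1)"
      using integral_abs_diff_le[OF finite_M integrable_continuous(1)[OF f]
          integrable_continuous(1)[OF g_cont] less_imp_le[OF approx]]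
        integral_abs_diff_le[OF finite_N integrable_continuous(2)[OF f]
          integrable_continuous(2)[OF g_cont] less_imp_le[OF approx]]
        integral_eq_real_polynomial[OF g] space_borel_T[OF sets_M] space_borel_T[OF sets_N]
      by simp
    also have "\<dots> = e * ((measure M (sphere 0 1) + measure N (sphere 0 1)) / c)"
      by (simp add: add_divide_distrib algebra_simps)
    also have "\<dots> \<le> e"
      using \<open>e > 0\<close> c by (intro mult_left_le) (simp_all add: c_def)
    finally show ?thesis
      by simp
  qed
  then show ?thesis
    using field_le_epsilon[of "\<bar>(\<integral>z. f z \<partial>M) - (\<integral>z. f z \<partial>N)\<bar>" 0] by simp
qed

lemma measures_eq: "M = N"
proof (rule finite_measure_eqI_integral_continuous[OF finite_M finite_N])
  show "sphere (0::complex) 1 \<in> sets borel"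
    by simp
  show "sets M = sets (restrict_space borel (sphere 0 1))" "sets N = sets (restrict_space borel (sphere 0 1))"
    using sets_M sets_N by (simp_all add: borel_T_eq_restrict_space)
qed (rule integral_eq_continuous)

end

section \<open>Inner products and polarization\<close>

lemma hlinear_id: "hlinear sm (\<lambda>x. x)"
  by (simp add: hlinear_def)

lemma hlinear_funpow: "hlinear sm T \<Longrightarrow> hlinear sm (T ^^ n)"
  by (induction n) (simp_all add: hlinear_def)

locale hilbert_space =
  fixes sm :: "complex \<Rightarrow> 'h::ab_group_add \<Rightarrow> 'h" and ip :: "'h \<Rightarrow> 'h \<Rightarrow> complex"
  assumes hilbert: "complex_hilbert_space sm ip"
begin

lemma sm_add_right: "sm a (x + y) = sm a x + sm a y"
  and sm_add_left: "sm (a + b) x = sm a x + sm b x"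
  and sm_one [simp]: "sm 1 x = x"
  and ip_add_left: "ip (x + y) z = ip x z + ip y z"
  and ip_sm_left: "ip (sm a x) y = a * ip x y"
  and ip_sym: "ip y x = cnj (ip x y)"
  and ip_self_pos: "x \<noteq> 0 \<Longrightarrow> Re (ip x x) > 0"
  using hilbert
  unfolding complex_hilbert_space_def complex_vector_space_def inner_product_def by blast+

lemma sm_zero_left [simp]: "sm 0 x = 0"
  using sm_add_left[of 0 0 x] by simp

lemma sm_zero_right [simp]: "sm a 0 = 0"
  using sm_add_right[of a 0 0] by simp

lemma sm_minus_left: "sm (- a) x = - sm a x"
  using sm_add_left[of a "- a" x] minus_unique[of "sm a x" "sm (- a) x"] by simp

lemma ip_add_right: "ip z (x + y) = ip z x + ip z y"
  by (metis ip_sym ip_add_left complex_cnj_add)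

lemma ip_sm_right: "ip x (sm a y) = cnj a * ip x y"
  by (metis ip_sym ip_sm_left complex_cnj_mult)

lemma ip_zero_left [simp]: "ip 0 y = 0"
  using ip_add_left[of 0 0 y] by simp

lemma ip_diff_left: "ip (x - z) y = ip x y - ip z y"
  using ip_add_left[of "x - z" z y] by simp

lemma ip_self_real: "ip x x = of_real (Re (ip x x))"
  using ip_sym[of x x] by (simp add: complex_eq_iff)

lemma ip_self_nonneg: "Re (ip x x) \<ge> 0"
  using ip_self_pos[of x] by (cases "x = 0") (simp_all add: less_imp_le)

lemma hnorm_nonneg: "hnorm ip x \<ge> 0"
  by (simp add: hnorm_def ip_self_nonneg)

lemma ip_self_eq_hnorm: "ip x x = of_real ((hnorm ip x)\<^sup>2)"
  using ip_self_real ip_self_nonneg by (simp add: hnorm_def)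

lemma hnorm_eq_zero_iff: "hnorm ip x = 0 \<longleftrightarrow> x = 0"
  using ip_self_pos[of x] ip_self_nonneg[of x] by (cases "x = 0") (auto simp: hnorm_def)

lemma hnorm_minus: "hnorm ip (- x) = hnorm ip x"
  using ip_sm_left[of "-1" x] ip_sm_right[of "- x" "-1" x] sm_minus_left[of 1 x]
  by (simp add: hnorm_def)

lemma hnorm_sm: "hnorm ip (sm a x) = cmod a * hnorm ip x"
proof -
  have "ip (sm a x) (sm a x) = (a * cnj a) * ip x x"
    by (simp add: ip_sm_left ip_sm_right mult.assoc)
  also have "a * cnj a = of_real ((cmod a)\<^sup>2)"
    by (rule complex_norm_square[symmetric])
  finally have "ip (sm a x) (sm a x) = of_real ((cmod a)\<^sup>2) * ip x x" .
  then have "Re (ip (sm a x) (sm a x)) = (cmod a)\<^sup>2 * Re (ip x x)"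
    by simp
  then show ?thesis
    by (simp add: hnorm_def real_sqrt_mult)
qed

lemma eq_zero_if_ip_eq_zero: "(\<And>y. ip x y = 0) \<Longrightarrow> x = 0"
  using ip_self_pos by force

lemma pythagoras: "ip x y = 0 \<Longrightarrow> (hnorm ip (x + y))\<^sup>2 = (hnorm ip x)\<^sup>2 + (hnorm ip y)\<^sup>2"
  using ip_sym[of y x] ip_self_nonneg[of x] ip_self_nonneg[of y] ip_self_nonneg[of "x + y"]
  by (simp add: hnorm_def ip_add_left ip_add_right)

lemma quadratic_form_add_sm:
  assumes "hlinear sm T"
  shows "ip (T (x + sm c y)) (x + sm c y) =
    ip (T x) x + cnj c * ip (T x) y + c * ip (T y) x + c * cnj c * ip (T y) y"
  using assms by (simp add: hlinear_def ip_add_left ip_add_right ip_sm_left ip_sm_right algebra_simps)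

lemma polarization:
  assumes "hlinear sm T"
  shows "4 * ip (T x) y = ip (T (x + y)) (x + y) - ip (T (x + sm (-1) y)) (x + sm (-1) y)
    + \<i> * ip (T (x + sm \<i> y)) (x + sm \<i> y) - \<i> * ip (T (x + sm (-\<i>) y)) (x + sm (-\<i>) y)"
proof -
  have "ip (T (x + y)) (x + y) = ip (T x) x + ip (T x) y + ip (T y) x + ip (T y) y"
    using quadratic_form_add_sm[OF assms, of x 1 y] by simp
  then show ?thesis
    unfolding quadratic_form_add_sm[OF assms] by (simp add: algebra_simps)
qed

lemma hlinear_eqI_quadratic_form:
  assumes "hlinear sm S" "hlinear sm T" and eq: "\<And>x. ip (S x) x = ip (T x) x"
  shows "S = T"
proof
  fix x
  have "4 * ip (S x) y = 4 * ip (T x) y" for y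
    by (simp only: polarization[OF assms(1)] polarization[OF assms(2)] eq)
  then have "ip (S x) y = ip (T x) y" for y
    by simp
  then show "S x = T x"
    using eq_zero_if_ip_eq_zero[of "S x - T x"] by (simp add: ip_diff_left)
qed

lemma conjugation_ip:
  assumes "conjugation sm ip C"
  shows "ip (C x) (C y) = cnj (ip x y)"
proof -
  have C_add: "C (x + y) = C x + C y" and C_sm: "C (sm a x) = sm (cnj a) (C x)"
    and C_hnorm: "hnorm ip (C x) = hnorm ip x" for x y a
    using assms unfolding conjugation_def by blast+
  let ?q = "\<lambda>v. ip v v"
  have q_C: "?q (C v) = ?q v" for v
    by (simp only: ip_self_eq_hnorm C_hnorm)
  have q_real: "cnj (?q v) = ?q v" for v
    using ip_sym[of v v] by simp
  have "4 * ip (C x) (C y) = ?q (C (x + y)) - ?q (C (x + sm (-1) y))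
      + \<i> * ?q (C (x + sm (-\<i>) y)) - \<i> * ?q (C (x + sm \<i> y))"
    using polarization[OF hlinear_id, of "C x" "C y"] by (simp add: C_add C_sm)
  also have "\<dots> = cnj (4 * ip x y)"
    using polarization[OF hlinear_id, of x y] by (simp only: q_C) (simp add: q_real algebra_simps)
  finally show ?thesis
    by simp
qed

end

section \<open>Projection-valued measures\<close>

locale projection_valued_measure = hilbert_space sm ip
  for sm :: "complex \<Rightarrow> 'h::ab_group_add \<Rightarrow> 'h" and ip :: "'h \<Rightarrow> 'h \<Rightarrow> complex" +
  fixes E :: "complex set \<Rightarrow> 'h \<Rightarrow> 'h"
  assumes pvm: "pv_measure sm ip E"
begin

lemma E_hlinear: "A \<in> borel_T \<Longrightarrow> hlinear sm (E A)"
  and E_idem: "A \<in> borel_T \<Longrightarrow> E A (E A x) = E A x"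
  and E_selfadjoint: "A \<in> borel_T \<Longrightarrow> ip (E A x) y = ip x (E A y)"
  and E_sphere: "E (sphere 0 1) x = x"
  and E_Int: "A \<in> borel_T \<Longrightarrow> B \<in> borel_T \<Longrightarrow> E (A \<inter> B) x = E A (E B x)"
  and E_countably_additive: "(\<And>i. F i \<in> borel_T) \<Longrightarrow> disjoint_family F \<Longrightarrow>
     (\<lambda>n. hnorm ip ((\<Sum>i<n. E (F i) x) - E (\<Union>i. F i) x)) \<longlonglongrightarrow> 0"
  using pvm unfolding pv_measure_def by blast+

lemma E_add: "A \<in> borel_T \<Longrightarrow> E A (x + y) = E A x + E A y"
  and E_sm: "A \<in> borel_T \<Longrightarrow> E A (sm a x) = sm a (E A x)"
  using E_hlinear unfolding hlinear_def by blast+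

lemma E_empty: "E {} x = 0"
proof -
  have "(\<lambda>n. hnorm ip ((\<Sum>i<n. E {} x) - E {} x)) \<longlonglongrightarrow> 0"
    using E_countably_additive[of "\<lambda>_. {}" x] borel_T_empty by (simp add: disjoint_family_on_def)
  moreover have "(\<Sum>i<n. E {} x) - E {} x = sm (of_real (real n - 1)) (E {} x)" for n
  proof (induction n)
    case 0
    show ?case
      using sm_minus_left[of 1 "E {} x"] by simp
  next
    case (Suc n)
    then show ?case
      using sm_add_left[of "of_real (real n - 1)" 1 "E {} x"] by (simp add: algebra_simps)
  qed
  moreover have "cmod (of_nat n - 1) = \<bar>real n - 1\<bar>" for n
    by (metis norm_of_real of_real_1 of_real_diff of_real_of_nat_eq)
  ultimately have "(\<lambda>n. \<bar>real n - 1\<bar> * hnorm ip (E {} x)) \<longlonglongrightarrow> 0"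
    by (simp add: hnorm_sm)
  moreover have "\<exists>N. \<forall>n\<ge>N. hnorm ip (E {} x) \<le> \<bar>real n - 1\<bar> * hnorm ip (E {} x)"
    using hnorm_nonneg[of "E {} x"] by (intro exI[of _ 2] allI impI) (simp add: mult_le_cancel_right1)
  ultimately have "hnorm ip (E {} x) \<le> 0"
    by (rule LIMSEQ_le_const)
  then show ?thesis
    using hnorm_nonneg[of "E {} x"] hnorm_eq_zero_iff by simp
qed

lemma E_Un:
  assumes A: "A \<in> borel_T" and B: "B \<in> borel_T" and disjoint: "A \<inter> B = {}"
  shows "E (A \<union> B) x = E A x + E B x"
proof -
  define F where "F i = (if i = 0 then A else if i = 1 then B else {})" for i :: nat
  have F: "F i \<in> borel_T" for i
    using A B borel_T_empty by (simp add: F_def)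
  have "disjoint_family F"
    using disjoint by (auto simp: disjoint_family_on_def F_def)
  then have "(\<lambda>n. hnorm ip ((\<Sum>i<n. E (F i) x) - E (\<Union>i. F i) x)) \<longlonglongrightarrow> 0"
    by (rule E_countably_additive[OF F])
  then have "(\<lambda>n. hnorm ip ((\<Sum>i<n + 2. E (F i) x) - E (\<Union>i. F i) x)) \<longlonglongrightarrow> 0"
    by (rule LIMSEQ_ignore_initial_segment)
  moreover have "(\<Union>i. F i) = A \<union> B"
    by (auto simp: F_def split: if_splits intro: UN_I[of 0] UN_I[of 1])
  moreover have "(\<Sum>i<n + 2. E (F i) x) = E A x + E B x" for n
    by (induction n) (simp_all add: F_def E_empty numeral_2_eq_2)
  ultimately have "(\<lambda>n. hnorm ip (E A x + E B x - E (A \<union> B) x)) \<longlonglongrightarrow> 0"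
    by (simp only:)
  then have "hnorm ip (E A x + E B x - E (A \<union> B) x) = 0"
    by (simp add: LIMSEQ_const_iff)
  then show ?thesis
    by (simp add: hnorm_eq_zero_iff)
qed

lemma E_sphere_Diff: "A \<in> borel_T \<Longrightarrow> E (sphere 0 1 - A) x = x - E A x"
  using E_Un[of A "sphere 0 1 - A" x] borel_T_sphere borel_T_Diff borel_T_subset[of A] E_sphere
  by (simp add: Un_absorb1 algebra_simps)

lemma E_orthogonal:
  assumes "A \<in> borel_T" "B \<in> borel_T" "A \<inter> B = {}"
  shows "ip (E A x) (E B y) = 0"
  using assms E_selfadjoint[of B "E A x" y] E_Int[of B A x] by (simp add: Int_commute E_empty)

lemma ip_E_self: "A \<in> borel_T \<Longrightarrow> ip (E A x) x = of_real ((hnorm ip (E A x))\<^sup>2)"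
  using E_idem[of A x] E_selfadjoint[of A "E A x" x] ip_self_eq_hnorm[of "E A x"] by simp

lemma E_UN_lessThan:
  fixes F :: "nat \<Rightarrow> complex set"
  assumes F: "\<And>i. F i \<in> borel_T" and "disjoint_family F"
  shows "E (\<Union>i<n. F i) x = (\<Sum>i<n. E (F i) x)"
    and "(hnorm ip (E (\<Union>i<n. F i) x))\<^sup>2 = (\<Sum>i<n. (hnorm ip (E (F i) x))\<^sup>2)"
proof (induction n)
  case 0
  show "E (\<Union>i<0. F i) x = (\<Sum>i<0. E (F i) x)" "(hnorm ip (E (\<Union>i<0. F i) x))\<^sup>2 = (\<Sum>i<0. (hnorm ip (E (F i) x))\<^sup>2)"
    by (simp_all add: E_empty hnorm_def)
next
  case (Suc n)
  have "F i \<inter> F n = {}" if "i < n" for i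
    using \<open>disjoint_family F\<close> that by (auto simp: disjoint_family_on_def)
  then have disjoint: "(\<Union>i<n. F i) \<inter> F n = {}"
    by auto
  have "(\<Union>i<Suc n. F i) = (\<Union>i<n. F i) \<union> F n"
    by (auto simp: lessThan_Suc)
  then have split: "E (\<Union>i<Suc n. F i) x = E (\<Union>i<n. F i) x + E (F n) x"
    using E_Un[OF borel_T_UN_lessThan[OF F] F disjoint] by simp
  then show "E (\<Union>i<Suc n. F i) x = (\<Sum>i<Suc n. E (F i) x)"
    using Suc.IH(1) by simp
  show "(hnorm ip (E (\<Union>i<Suc n. F i) x))\<^sup>2 = (\<Sum>i<Suc n. (hnorm ip (E (F i) x))\<^sup>2)"
    using Suc.IH(2) pythagoras[OF E_orthogonal[OF borel_T_UN_lessThan[OF F] F disjoint]]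
    by (simp add: split)
qed

abbreviation \<mu> :: "'h \<Rightarrow> complex measure" where
  "\<mu> x \<equiv> pvm_scalar ip E x"

lemma countably_additive_hnorm_E:
  "countably_additive borel_T (\<lambda>A. ennreal ((hnorm ip (E A x))\<^sup>2))"
  unfolding countably_additive_def
proof (intro allI impI)
  fix F :: "nat \<Rightarrow> complex set"
  assume "range F \<subseteq> borel_T" and disjoint: "disjoint_family F" and UN: "(\<Union>i. F i) \<in> borel_T"
  then have F: "F i \<in> borel_T" for i
    by auto
  define r where "r n = hnorm ip ((\<Sum>i<n. E (F i) x) - E (\<Union>i. F i) x)" for n
  have "r \<longlonglongrightarrow> 0"
    unfolding r_def by (rule E_countably_additive[OF F disjoint])
  have partial_sum: "(\<Sum>i<n. (hnorm ip (E (F i) x))\<^sup>2) = (hnorm ip (E (\<Union>i. F i) x))\<^sup>2 - (r n)\<^sup>2" for n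
  proof -
    let ?R = "(\<Union>i. F i) - (\<Union>i<n. F i)"
    have R: "?R \<in> borel_T"
      by (rule borel_T_Diff[OF UN borel_T_UN_lessThan[OF F]])
    have disjoint_R: "(\<Union>i<n. F i) \<inter> ?R = {}"
      by auto
    have "(\<Union>i<n. F i) \<union> ?R = (\<Union>i. F i)"
      by auto
    then have split: "E (\<Union>i. F i) x = E (\<Union>i<n. F i) x + E ?R x"
      using E_Un[OF borel_T_UN_lessThan[OF F] R disjoint_R] by simp
    then have "E ?R x = - ((\<Sum>i<n. E (F i) x) - E (\<Union>i. F i) x)"
      using E_UN_lessThan(1)[OF F disjoint, of n x] by (simp add: algebra_simps)
    then have "hnorm ip (E ?R x) = r n"
      unfolding r_def by (simp only: hnorm_minus)
    then show ?thesis
      using split pythagoras[OF E_orthogonal[OF borel_T_UN_lessThan[OF F] R disjoint_R]]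
        E_UN_lessThan(2)[OF F disjoint, of n x]
      by simp
  qed
  have "(\<lambda>n. (hnorm ip (E (\<Union>i. F i) x))\<^sup>2 - (r n)\<^sup>2) \<longlonglongrightarrow> (hnorm ip (E (\<Union>i. F i) x))\<^sup>2 - 0\<^sup>2"
    by (intro tendsto_intros \<open>r \<longlonglongrightarrow> 0\<close>)
  then have "(\<lambda>i. (hnorm ip (E (F i) x))\<^sup>2) sums (hnorm ip (E (\<Union>i. F i) x))\<^sup>2"
    unfolding sums_def partial_sum by simp
  then show "(\<Sum>i. ennreal ((hnorm ip (E (F i) x))\<^sup>2)) = ennreal ((hnorm ip (E (\<Union>i. F i) x))\<^sup>2)"
    by (rule suminf_ennreal_eq[rotated]) simp
qed

lemma sets_\<mu> [simp]: "sets (\<mu> x) = borel_T"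
  and space_\<mu> [simp]: "space (\<mu> x) = sphere 0 1"
  unfolding pvm_scalar_def
  by (rule sigma_algebra.sets_measure_of_eq[OF sigma_algebra_borel_T],
      rule sigma_algebra.space_measure_of_eq[OF sigma_algebra_borel_T])

lemma emeasure_\<mu>: "A \<in> borel_T \<Longrightarrow> emeasure (\<mu> x) A = ennreal ((hnorm ip (E A x))\<^sup>2)"
  unfolding pvm_scalar_def
proof (rule emeasure_measure_of_sigma[OF sigma_algebra_borel_T _ countably_additive_hnorm_E])
  show "positive borel_T (\<lambda>A. ennreal ((hnorm ip (E A x))\<^sup>2))"
    by (simp add: positive_def E_empty hnorm_def)
qed

lemma measure_\<mu>: "A \<in> borel_T \<Longrightarrow> measure (\<mu> x) A = (hnorm ip (E A x))\<^sup>2"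
  by (simp add: measure_def emeasure_\<mu>)

lemma finite_measure_\<mu>: "finite_measure (\<mu> x)"
  by (rule finite_measureI) (simp add: emeasure_\<mu> borel_T_sphere)

lemma measurable_\<mu>: "f \<in> borel_measurable borel \<Longrightarrow> f \<in> borel_measurable (\<mu> x)"
  unfolding measurable_cong_sets[OF sets_\<mu>[unfolded borel_T_eq_restrict_space] refl]
  by (rule measurable_restrict_space1)

lemma integrable_\<mu>:
  fixes f :: "complex \<Rightarrow> 'b::{banach, second_countable_topology}"
  assumes "f \<in> borel_measurable (\<mu> x)" "\<And>z. z \<in> sphere 0 1 \<Longrightarrow> norm (f z) \<le> B"
  shows "integrable (\<mu> x) f"
proof -
  interpret finite_measure "\<mu> x"
    by (rule finite_measure_\<mu>)
  show ?thesis
    using assms by (intro integrable_const_bound[where B = B]) auto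
qed

lemma \<mu>_E_eq_density: "A \<in> borel_T \<Longrightarrow> \<mu> (E A x) = density (\<mu> x) (\<lambda>z. ennreal (indicator A z))"
proof (rule measure_eqI)
  fix B assume "A \<in> borel_T" "B \<in> sets (\<mu> (E A x))"
  then have AB: "B \<inter> A \<in> borel_T" "B \<in> borel_T"
    by (simp_all add: borel_T_Int)
  have "emeasure (density (\<mu> x) (\<lambda>z. ennreal (indicator A z))) B =
      (\<integral>\<^sup>+z. ennreal (indicator A z) * indicator B z \<partial>\<mu> x)"
    using \<open>A \<in> borel_T\<close> AB by (intro emeasure_density) (auto intro: borel_measurable_indicator)
  also have "\<dots> = (\<integral>\<^sup>+z. indicator (B \<inter> A) z \<partial>\<mu> x)"
    by (rule nn_integral_cong) (simp split: split_indicator)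
  also have "\<dots> = emeasure (\<mu> x) (B \<inter> A)"
    using AB by (intro nn_integral_indicator) simp
  also have "\<dots> = emeasure (\<mu> (E A x)) B"
    using \<open>A \<in> borel_T\<close> AB by (simp add: emeasure_\<mu> E_Int)
  finally show "emeasure (\<mu> (E A x)) B = emeasure (density (\<mu> x) (\<lambda>z. ennreal (indicator A z))) B" ..
qed simp

lemma measurable_cnj_\<mu>: "cnj \<in> measurable (\<mu> x) (\<mu> y)"
proof -
  have "cnj \<in> measurable (restrict_space borel (sphere 0 1)) (restrict_space borel (sphere 0 1))"
    by (rule measurable_restrict_space3) (auto intro: borel_measurable_continuous_onI continuous_intros)
  then show ?thesis
    by (simp only: measurable_cong_sets[OF sets_\<mu>[unfolded borel_T_eq_restrict_space]
          sets_\<mu>[unfolded borel_T_eq_restrict_space]])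
qed

lemma integral_\<mu>_E:
  fixes f :: "complex \<Rightarrow> 'b::{banach, second_countable_topology}"
  assumes "A \<in> borel_T" "f \<in> borel_measurable (\<mu> x)"
  shows "(\<integral>z. f z \<partial>\<mu> (E A x)) = (\<integral>z. indicator A z *\<^sub>R f z \<partial>\<mu> x)"
  using assms by (simp add: \<mu>_E_eq_density integral_density borel_measurable_indicator)

lemma E_commute_if_quadratic_form_splits:
  assumes A: "A \<in> borel_T" and T: "hlinear sm T"
    and splits: "\<And>y. ip (T y) y =
      ip (T (E A y)) (E A y) + ip (T (E (sphere 0 1 - A) y)) (E (sphere 0 1 - A) y)"
  shows "T (E A x) = E A (T x)"
proof -
  let ?P = "E A" and ?Q = "E (sphere 0 1 - A)"
  have A': "sphere 0 1 - A \<in> borel_T"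
    by (rule borel_T_Diff[OF borel_T_sphere A])
  have PQ: "y = ?P y + ?Q y" for y
    by (simp add: E_sphere_Diff[OF A])
  have PQ_zero: "?P (?Q y) = 0" "?Q (?P y) = 0" for y
    using E_Int[OF A A', of y] E_Int[OF A' A, of y] by (simp_all add: Int_commute E_empty)
  have T_add: "T (y + w) = T y + T w" and T_sm: "T (sm c y) = sm c (T y)" for y w c
    using T by (simp_all add: hlinear_def)
  have cross: "ip (T (?P y)) (?Q y) + ip (T (?Q y)) (?P y) = 0" for y
    using splits[of y] PQ[of y] quadratic_form_add_sm[OF T, of "?P y" 1 "?Q y"] by simp
  have cross_zero: "ip (T (?P a)) (?Q b) = 0 \<and> ip (T (?Q b)) (?P a) = 0" for a b
  proof -
    have "cnj c * ip (T (?P a)) (?Q b) + c * ip (T (?Q b)) (?P a) = 0" for c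
    proof -
      have "?P (?P a + sm c (?Q b)) = ?P a" "?Q (?P a + sm c (?Q b)) = sm c (?Q b)"
        using PQ_zero by (simp_all add: E_add E_sm E_idem A A')
      then show ?thesis
        using cross[of "?P a + sm c (?Q b)"] by (simp add: ip_sm_left ip_sm_right T_sm)
    qed
    from this[of 1] this[of \<i>] show ?thesis
      by (simp add: algebra_simps)
  qed
  have "?Q (T (?P x)) = 0"
    using E_selfadjoint[OF A'] cross_zero by (intro eq_zero_if_ip_eq_zero) metis
  moreover have "?P (T (?Q x)) = 0"
    using E_selfadjoint[OF A] cross_zero by (intro eq_zero_if_ip_eq_zero) metis
  ultimately have "T (?P x) = ?P (T (?P x)) + ?P (T (?Q x))"
    using PQ[of "T (?P x)"] by simp
  also have "\<dots> = ?P (T (?P x + ?Q x))"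
    by (simp add: T_add E_add[OF A])
  also have "\<dots> = ?P (T x)"
    by (simp only: PQ[of x, symmetric])
  finally show ?thesis .
qed

end

section \<open>The spectral measure of a unitary operator\<close>

locale spectral_unitary = projection_valued_measure sm ip E
  for sm :: "complex \<Rightarrow> 'h::ab_group_add \<Rightarrow> 'h" and ip :: "'h \<Rightarrow> 'h \<Rightarrow> complex"
    and E :: "complex set \<Rightarrow> 'h \<Rightarrow> 'h" +
  fixes U :: "'h \<Rightarrow> 'h"
  assumes unitary: "unitary_op sm ip U" and spectral: "spectral_measure_of sm ip U E"
begin

lemma U_hlinear: "hlinear sm U"
  and U_ip: "ip (U x) (U y) = ip x y"
  and quadratic_form_U: "ip (U x) x = (\<integral>z. z \<partial>\<mu> x)"
  using unitary spectral unfolding unitary_op_def spectral_measure_of_def by blast+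

lemma quadratic_form_U_E:
  "A \<in> borel_T \<Longrightarrow> ip (U (E A x)) (E A x) = (\<integral>z. indicator A z *\<^sub>R z \<partial>\<mu> x)"
  using quadratic_form_U[of "E A x"] integral_\<mu>_E[of A "\<lambda>z. z"] by (simp add: measurable_\<mu>)

lemma U_E_commute:
  assumes A: "A \<in> borel_T"
  shows "U (E A x) = E A (U x)"
proof (rule E_commute_if_quadratic_form_splits[OF A U_hlinear])
  fix y
  have A': "sphere 0 1 - A \<in> borel_T"
    by (rule borel_T_Diff[OF borel_T_sphere A])
  have integrable: "integrable (\<mu> y) (\<lambda>z. indicator B z *\<^sub>R z)" if "B \<in> borel_T" for B
    using that by (intro integrable_\<mu>[where B = 1] borel_measurable_scaleR borel_measurable_indicator
        measurable_\<mu>) (auto split: split_indicator)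
  have "(\<integral>z. z \<partial>\<mu> y) = (\<integral>z. indicator A z *\<^sub>R z + indicator (sphere 0 1 - A) z *\<^sub>R z \<partial>\<mu> y)"
    by (rule Bochner_Integration.integral_cong) (auto split: split_indicator)
  then have "ip (U y) y = (\<integral>z. indicator A z *\<^sub>R z \<partial>\<mu> y) + (\<integral>z. indicator (sphere 0 1 - A) z *\<^sub>R z \<partial>\<mu> y)"
    using integrable[OF A] integrable[OF A'] by (simp add: quadratic_form_U)
  then show "ip (U y) y = ip (U (E A y)) (E A y) + ip (U (E (sphere 0 1 - A) y)) (E (sphere 0 1 - A) y)"
    unfolding quadratic_form_U_E[OF A] quadratic_form_U_E[OF A'] .
qed

lemma hnorm_U_add_sm_sq:
  "(hnorm ip (U w + sm c w))\<^sup>2 = (1 + (cmod c)\<^sup>2) * (hnorm ip w)\<^sup>2 + 2 * Re (cnj c * ip (U w) w)"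
proof -
  have "of_real ((hnorm ip (U w + sm c w))\<^sup>2) =
      ip (U w) (U w) + cnj c * ip (U w) w + c * ip w (U w) + c * cnj c * ip w w"
    using quadratic_form_add_sm[OF hlinear_id, of "U w" c w] by (simp add: ip_self_eq_hnorm)
  also have "\<dots> = of_real ((1 + (cmod c)\<^sup>2) * (hnorm ip w)\<^sup>2) + (cnj c * ip (U w) w + cnj (cnj c * ip (U w) w))"
  proof -
    have "ip (U w) (U w) = of_real ((hnorm ip w)\<^sup>2)"
      by (subst U_ip) (rule ip_self_eq_hnorm)
    moreover have "c * cnj c * ip w w = of_real ((cmod c)\<^sup>2 * (hnorm ip w)\<^sup>2)"
      by (simp only: of_real_mult complex_norm_square ip_self_eq_hnorm)
    moreover have "c * ip w (U w) = cnj (cnj c * ip (U w) w)"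
      using ip_sym[of w "U w"] by simp
    ultimately show ?thesis
      by (simp add: algebra_simps)
  qed
  also have "\<dots> = of_real ((1 + (cmod c)\<^sup>2) * (hnorm ip w)\<^sup>2 + 2 * Re (cnj c * ip (U w) w))"
    by (simp only: complex_add_cnj of_real_add)
  finally show ?thesis
    by (simp only: of_real_eq_iff)
qed

lemma integral_indicator_norm_add_sq:
  assumes B: "B \<in> borel_T"
  shows "(\<integral>z. indicator B z * (cmod (z + c))\<^sup>2 \<partial>\<mu> y) =
    (1 + (cmod c)\<^sup>2) * measure (\<mu> y) B + 2 * Re (cnj c * (\<integral>z. indicator B z *\<^sub>R z \<partial>\<mu> y))"
proof -
  have integrable: "integrable (\<mu> y) (\<lambda>z. cnj c * (indicator B z *\<^sub>R z))"
    using B by (intro integrable_\<mu>[where B = "cmod c"] borel_measurable_scaleR borel_measurable_indicator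
        measurable_\<mu> borel_measurable_times) (auto simp: norm_mult split: split_indicator)
  have "(\<integral>z. indicator B z * (cmod (z + c))\<^sup>2 \<partial>\<mu> y) =
      (\<integral>z. (1 + (cmod c)\<^sup>2) * indicator B z + 2 * Re (cnj c * (indicator B z *\<^sub>R z)) \<partial>\<mu> y)"
    by (rule Bochner_Integration.integral_cong)
      (auto simp: norm_add_sq_circle split: split_indicator)
  also have "\<dots> = (1 + (cmod c)\<^sup>2) * (\<integral>z. indicator B z \<partial>\<mu> y) + 2 * (\<integral>z. Re (cnj c * (indicator B z *\<^sub>R z)) \<partial>\<mu> y)"
    using B integrable_Re[OF integrable] emeasure_\<mu>[OF B] by (simp add: integrable_real_indicator)
  also have "(\<integral>z. indicator B z \<partial>\<mu> y) = measure (\<mu> y) B"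
    using borel_T_subset[OF B] by (simp add: Int_absorb2)
  also have "(\<integral>z. Re (cnj c * (indicator B z *\<^sub>R z)) \<partial>\<mu> y) = Re (cnj c * (\<integral>z. indicator B z *\<^sub>R z \<partial>\<mu> y))"
    by (simp only: integral_Re[OF integrable] integral_mult_right_zero)
  finally show ?thesis .
qed

lemma \<mu>_U_add_sm: "\<mu> (U y + sm c y) = density (\<mu> y) (\<lambda>z. ennreal ((cmod (z + c))\<^sup>2))"
proof (rule measure_eqI)
  fix B assume "B \<in> sets (\<mu> (U y + sm c y))"
  then have B: "B \<in> borel_T"
    by simp
  have integrable: "integrable (\<mu> y) (\<lambda>z. indicator B z * (cmod (z + c))\<^sup>2)"
    using B by (intro integrable_\<mu>[where B = "(1 + cmod c)\<^sup>2"] borel_measurable_times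
        borel_measurable_indicator measurable_\<mu> borel_measurable_continuous_onI)
      (auto intro!: continuous_intros power_mono order.trans[OF norm_triangle_ineq] split: split_indicator)
  have "emeasure (density (\<mu> y) (\<lambda>z. ennreal ((cmod (z + c))\<^sup>2))) B =
      (\<integral>\<^sup>+z. ennreal (indicator B z * (cmod (z + c))\<^sup>2) \<partial>\<mu> y)"
    using B by (subst emeasure_density)
      (auto intro!: measurable_\<mu> borel_measurable_continuous_onI continuous_intros nn_integral_cong
        split: split_indicator)
  also have "\<dots> = ennreal (\<integral>z. indicator B z * (cmod (z + c))\<^sup>2 \<partial>\<mu> y)"
    by (rule nn_integral_eq_integral[OF integrable]) simp
  also have "\<dots> = ennreal ((hnorm ip (U (E B y) + sm c (E B y)))\<^sup>2)"
    by (simp only: integral_indicator_norm_add_sq[OF B] measure_\<mu>[OF B] quadratic_form_U_E[OF B, symmetric]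
        hnorm_U_add_sm_sq)
  also have "U (E B y) + sm c (E B y) = E B (U y + sm c y)"
    by (simp add: E_add[OF B] E_sm[OF B] U_E_commute[OF B])
  finally show "emeasure (\<mu> (U y + sm c y)) B = emeasure (density (\<mu> y) (\<lambda>z. ennreal ((cmod (z + c))\<^sup>2))) B"
    by (simp add: emeasure_\<mu>[OF B])
qed simp

lemma moments_U: "ip ((U ^^ n) y) y = (\<integral>z. z ^ n \<partial>\<mu> y)"
proof (induction n arbitrary: y)
  case 0
  have "ip y y = of_real (measure (\<mu> y) (sphere 0 1))"
    by (simp add: measure_\<mu> borel_T_sphere E_sphere ip_self_eq_hnorm)
  then show ?case
    by (simp add: scaleR_conv_of_real)
next
  case (Suc n)
  let ?w = "\<lambda>z c. (cmod (z + c))\<^sup>2 *\<^sub>R z ^ n"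
  have integrable: "integrable (\<mu> y) (\<lambda>z. ?w z c)" for c
    by (intro integrable_continuous_on_compact[OF finite_measure_\<mu> _ compact_sphere] continuous_intros)
      (simp add: borel_T_eq_restrict_space)
  have shifted: "ip ((U ^^ n) (U y + sm c y)) (U y + sm c y) = (\<integral>z. ?w z c \<partial>\<mu> y)" for c
    unfolding Suc.IH \<mu>_U_add_sm
    by (subst integral_density) (auto intro!: measurable_\<mu> borel_measurable_continuous_onI continuous_intros)
  have "4 * ip ((U ^^ n) (U y)) y = (\<integral>z. ?w z 1 \<partial>\<mu> y) - (\<integral>z. ?w z (-1) \<partial>\<mu> y)
      + \<i> * (\<integral>z. ?w z \<i> \<partial>\<mu> y) - \<i> * (\<integral>z. ?w z (-\<i>) \<partial>\<mu> y)"
    by (simp only: polarization[OF hlinear_funpow[OF U_hlinear]] shifted shifted[of 1, unfolded sm_one])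
  also have "\<dots> = (\<integral>z. ?w z 1 - ?w z (-1) + \<i> * ?w z \<i> - \<i> * ?w z (-\<i>) \<partial>\<mu> y)"
    by (simp only: Bochner_Integration.integral_add Bochner_Integration.integral_diff integral_mult_right_zero
        integrable Bochner_Integration.integrable_add Bochner_Integration.integrable_diff integrable_mult_right)
  also have "\<dots> = (\<integral>z. 4 * z ^ Suc n \<partial>\<mu> y)"
  proof (rule Bochner_Integration.integral_cong)
    fix z :: complex
    have weights: "of_real ((cmod (z + 1))\<^sup>2) - of_real ((cmod (z + -1))\<^sup>2)
        + \<i> * of_real ((cmod (z + \<i>))\<^sup>2) - \<i> * of_real ((cmod (z + -\<i>))\<^sup>2) = 4 * z"
      unfolding cmod_power2 by (simp add: complex_eq_iff power2_eq_square algebra_simps)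
    have "?w z 1 - ?w z (-1) + \<i> * ?w z \<i> - \<i> * ?w z (-\<i>) =
        (of_real ((cmod (z + 1))\<^sup>2) - of_real ((cmod (z + -1))\<^sup>2)
         + \<i> * of_real ((cmod (z + \<i>))\<^sup>2) - \<i> * of_real ((cmod (z + -\<i>))\<^sup>2)) * z ^ n"
      by (simp only: scaleR_conv_of_real algebra_simps)
    then show "?w z 1 - ?w z (-1) + \<i> * ?w z \<i> - \<i> * ?w z (-\<i>) = 4 * z ^ Suc n"
      by (simp only: weights) simp
  qed simp
  finally show ?case
    by (simp add: funpow_Suc_right del: funpow.simps)
qed

end

section \<open>Conjugations commuting with the unitary operator\<close>

locale spectral_conjugation = spectral_unitary sm ip E U
  for sm :: "complex \<Rightarrow> 'h::ab_group_add \<Rightarrow> 'h" and ip :: "'h \<Rightarrow> 'h \<Rightarrow> complex"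
    and E :: "complex set \<Rightarrow> 'h \<Rightarrow> 'h" and U :: "'h \<Rightarrow> 'h" +
  fixes C :: "'h \<Rightarrow> 'h"
  assumes conjugation: "conjugation sm ip C" and C_U_C: "\<And>x. C (U (C x)) = U x"
begin

lemma C_add: "C (x + y) = C x + C y"
  and C_sm: "C (sm a x) = sm (cnj a) (C x)"
  and C_C [simp]: "C (C x) = x"
  using conjugation unfolding conjugation_def by blast+

lemma C_zero [simp]: "C 0 = 0"
  using C_add[of 0 0] by simp

lemma C_funpow_U: "C ((U ^^ n) (C x)) = (U ^^ n) x"
proof (induction n arbitrary: x)
  case (Suc n)
  have "C ((U ^^ Suc n) (C x)) = C (U (C (C ((U ^^ n) (C x)))))"
    by simp
  also have "\<dots> = U ((U ^^ n) x)"
    by (simp only: C_U_C Suc.IH)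
  finally show ?case
    by simp
qed simp

lemma distr_\<mu>_C: "distr (\<mu> (C y)) (\<mu> y) cnj = \<mu> y"
proof -
  note cnj_measurable = measurable_cnj_\<mu>[of "C y" y]
  have "circle_measures_equal_moments (distr (\<mu> (C y)) (\<mu> y) cnj) (\<mu> y)"
  proof (rule circle_measures_equal_moments.intro)
    show "finite_measure (distr (\<mu> (C y)) (\<mu> y) cnj)"
      by (rule finite_measure.finite_measure_distr[OF finite_measure_\<mu> cnj_measurable])
    show "(\<integral>z. z ^ n \<partial>distr (\<mu> (C y)) (\<mu> y) cnj) = (\<integral>z. z ^ n \<partial>\<mu> y)" for n
    proof -
      have "(\<integral>z. z ^ n \<partial>distr (\<mu> (C y)) (\<mu> y) cnj) = (\<integral>z. cnj z ^ n \<partial>\<mu> (C y))"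
        by (rule integral_distr[OF cnj_measurable])
          (auto intro: measurable_\<mu> borel_measurable_continuous_onI continuous_intros)
      also have "\<dots> = cnj (\<integral>z. z ^ n \<partial>\<mu> (C y))"
        by (simp only: complex_cnj_power[symmetric] Bochner_Integration.integral_cnj)
      also have "\<dots> = ip (C ((U ^^ n) (C y))) (C (C y))"
        by (simp only: moments_U conjugation_ip[OF conjugation])
      also have "\<dots> = (\<integral>z. z ^ n \<partial>\<mu> y)"
        by (simp only: C_funpow_U C_C moments_U)
      finally show ?thesis .
    qed
  qed (simp_all add: finite_measure_\<mu>)
  then show ?thesis
    by (rule circle_measures_equal_moments.measures_eq)
qed

lemma hnorm_E_cnj_image_C:
  assumes A: "A \<in> borel_T"
  shows "hnorm ip (E (cnj ` A) (C y)) = hnorm ip (E A y)"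
proof -
  have "cnj -` A \<inter> sphere 0 1 = cnj ` A"
    using borel_T_subset[OF A] by (auto simp: image_iff) (metis complex_cnj_cnj)
  then have "emeasure (\<mu> (C y)) (cnj ` A) = emeasure (distr (\<mu> (C y)) (\<mu> y) cnj) A"
    using A by (simp add: emeasure_distr measurable_cnj_\<mu>)
  then have "ennreal ((hnorm ip (E (cnj ` A) (C y)))\<^sup>2) = ennreal ((hnorm ip (E A y))\<^sup>2)"
    by (simp only: distr_\<mu>_C emeasure_\<mu> A borel_T_cnj_image[OF A])
  then show ?thesis
    using hnorm_nonneg by (simp add: power2_eq_iff_nonneg)
qed

lemma E_cnj_image_C:
  assumes A: "A \<in> borel_T"
  shows "C (E (cnj ` A) (C x)) = E A x"
proof -
  have A': "cnj ` A \<in> borel_T"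
    by (rule borel_T_cnj_image[OF A])
  have linear: "hlinear sm (\<lambda>x. C (E (cnj ` A) (C x)))"
    using E_hlinear[OF A'] by (simp add: hlinear_def C_add C_sm)
  have quadratic_form: "ip (C (E (cnj ` A) (C y))) y = ip (E A y) y" for y
  proof -
    have "ip (C (E (cnj ` A) (C y))) y = cnj (ip (E (cnj ` A) (C y)) (C y))"
      using conjugation_ip[OF conjugation, of "E (cnj ` A) (C y)" "C y"] by simp
    then show ?thesis
      by (simp add: ip_E_self A A' hnorm_E_cnj_image_C)
  qed
  have "(\<lambda>x. C (E (cnj ` A) (C x))) = E A"
    by (rule hlinear_eqI_quadratic_form[OF linear E_hlinear[OF A] quadratic_form])
  then show ?thesis
    by (rule fun_cong)
qed

lemma C_image_range_E:
  assumes "\<Omega> \<in> borel_T" "cnj ` \<Omega> = \<Omega>"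
  shows "C ` range (E \<Omega>) = range (E \<Omega>)"
proof -
  have "C (E \<Omega> x) = E \<Omega> (C x)" for x
    using E_cnj_image_C[OF assms(1), of "C x"] assms(2) by simp
  then have "C ` range (E \<Omega>) = range (\<lambda>x. E \<Omega> (C x))"
    by (simp add: image_image)
  also have "\<dots> = range (E \<Omega>)"
    using surjI[of C C] by (metis C_C image_image)
  finally show ?thesis .
qed

lemma E_Diff_cnj_image:
  assumes \<Omega>: "\<Omega> \<in> borel_T" and invariant: "C ` range (E \<Omega>) \<subseteq> range (E \<Omega>)"
  shows "E (\<Omega> - cnj ` \<Omega>) x = 0"
proof -
  let ?\<Omega>' = "cnj ` \<Omega>"
  have \<Omega>': "?\<Omega>' \<in> borel_T"
    by (rule borel_T_cnj_image[OF \<Omega>])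
  have "E (?\<Omega>' - \<Omega>) y = 0" for y
  proof -
    have "E ?\<Omega>' y = C (E \<Omega> (C y))"
      using E_cnj_image_C[OF \<Omega>', of y] by (simp add: image_image)
    then obtain v where "E ?\<Omega>' y = E \<Omega> v"
      using invariant by blast
    then have "E (\<Omega> \<inter> ?\<Omega>') y = E ?\<Omega>' y"
      by (simp add: E_Int[OF \<Omega> \<Omega>'] E_idem[OF \<Omega>])
    moreover have "E ?\<Omega>' y = E (?\<Omega>' \<inter> \<Omega>) y + E (?\<Omega>' - \<Omega>) y"
      using E_Un[OF borel_T_Int[OF \<Omega>' \<Omega>] borel_T_Diff[OF \<Omega>' \<Omega>], of y] by (simp add: Int_Diff_Un Int_Diff_disjoint)
    ultimately show ?thesis
      by (simp add: Int_commute)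
  qed
  moreover have "cnj ` (\<Omega> - ?\<Omega>') = ?\<Omega>' - \<Omega>"
    by (auto simp: image_iff) (metis complex_cnj_cnj)+
  ultimately show ?thesis
    using E_cnj_image_C[OF borel_T_Diff[OF \<Omega> \<Omega>'], of x] by simp
qed

end

theorem proposition4p4:
  fixes sm :: "complex \<Rightarrow> 'h::ab_group_add \<Rightarrow> 'h"
    and ip :: "'h \<Rightarrow> 'h \<Rightarrow> complex"
    and U :: "'h \<Rightarrow> 'h"
    and E :: "complex set \<Rightarrow> 'h \<Rightarrow> 'h"
    and \<Omega> :: "complex set"
  assumes H: "complex_hilbert_space sm ip"
    and sep: "hseparable ip"
    and U: "unitary_op sm ip U"
    and E: "spectral_measure_of sm ip U E"
    and \<Omega>: "\<Omega> \<in> borel_T"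
  shows "(cnj ` \<Omega> = \<Omega> \<longrightarrow>
            (\<forall>C. conjugation sm ip C \<and> (\<forall>x. C (U (C x)) = U x)
                 \<longrightarrow> C ` range (E \<Omega>) = range (E \<Omega>)))
       \<and> (\<forall>C. conjugation sm ip C \<and> (\<forall>x. C (U (C x)) = U x) \<and> C ` range (E \<Omega>) \<subseteq> range (E \<Omega>)
                 \<longrightarrow> (\<forall>x. E (\<Omega> - cnj ` \<Omega>) x = 0))"
proof -
  have spectral_conj: "spectral_conjugation sm ip E U C"
    if "conjugation sm ip C" "\<forall>x. C (U (C x)) = U x" for C
    using H U E that
    by (simp add: spectral_conjugation_def spectral_conjugation_axioms_def spectral_unitary_def
        spectral_unitary_axioms_def projection_valued_measure_def projection_valued_measure_axioms_def
        hilbert_space_def spectral_measure_of_def)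
  show ?thesis
    using spectral_conjugation.C_image_range_E[OF spectral_conj \<Omega>]
      spectral_conjugation.E_Diff_cnj_image[OF spectral_conj \<Omega>]
    by blast
qed

end
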